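(* Let $\gamma=(\gamma_1,\dots,\gamma_b)$ be a parallel map on $V=V_1\oplus\cdots\oplus V_b$, $V_i\cong(\mathbb F_2)^m$, with $0\gamma=0$. Suppose every $\gamma_i$ is differentially $2^r$-uniform with $r<m-1$ and strongly $r$-anti-invariant. If $\gamma$ maps $\mathcal{LA}_U(W_1|W_2)$ onto a non-trivial partition $\mathcal{LA}_{U'}(W_1'|W_2')$, where $U,U'$ satisfy $J_U\cap J_{U'}=\emptyset$, then $W_1,W_1',W_2,W_2'$ are walls and $W_1=W_1'=W_2=W_2'$; in particular both partitions are linear.
   Context: Let $m,b>1$, $n=mb$, $V=(\mathbb F_2)^n=V_1\oplus\cdots\oplus V_b$, $V_i\cong(\mathbb F_2)^m$. Permutations act on the right. A parallel map is $\gamma\in\mathrm{Sym}(V)$ with $(v_1\oplus\cdots\oplus v_b)\gamma=v_1\gamma_1\oplus\cdots\oplus v_b\gamma_b$, $\gamma_i\in\mathrm{Sym}(V_i)$. A wall is $\bigoplus_{i\in I}V_i$ with $\emptyset\ne I\subsetneq\{1,\dots,b\}$. For a subspace $U$ of dimension $n-1$, $J_U=\{j:V_j\cap U\subsetneq V_j\}$. $f:(\mathbb F_2)^m\to(\mathbb F_2)^m$ is differentially $\delta$-uniform if $\delta=\max_{a\ne0,b}|\{x:f(x+a)+f(x)=b\}|$; for $f(0)=0$ and $1\le r<m$, $f$ is strongly $r$-anti-invariant if for all subspaces $A,B$ of $(\mathbb F_2)^m$ with $f(A)=B$, either $\dim A=\dim B<m-r$ or $A=B=(\mathbb F_2)^m$.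 A permutation maps $\mathcal A$ onto $\mathcal B$ if it sends the blocks of $\mathcal A$ exactly onto those of $\mathcal B$; trivial partitions are the singleton partition and $\{V\}$. $\mathcal L(W)=\{W+v:v\in V\}$ (linear partition). For a subspace $U$ of dimension $n-1$ and subspaces $W_1,W_2\subseteq U$, $\mathcal{LA}_U(W_1|W_2)=\{W_1+v:v\in U\}\cup\{(W_2+\bar v)+v:v\in U\}$ for any $\bar v\in V\setminus U$. *)

theory Defs
  imports Main
begin

text \<open>Vectors of (F_2)^n are modelled as functions nat \<Rightarrow> bool vanishing from index n on;
  addition is pointwise xor. V = vecs (m*b); block V_i (0-indexed, i < b) consists of the
  coordinates i*m ..< (i+1)*m.\<close>

definition vecs :: "nat \<Rightarrow> (nat \<Rightarrow> bool) set" where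
  "vecs n = {x. \<forall>k\<ge>n. \<not> x k}"

definition vadd :: "(nat \<Rightarrow> bool) \<Rightarrow> (nat \<Rightarrow> bool) \<Rightarrow> (nat \<Rightarrow> bool)" where
  "vadd x y = (\<lambda>k. x k \<noteq> y k)"

definition vzero :: "nat \<Rightarrow> bool" where
  "vzero = (\<lambda>k. False)"

definition subspace :: "nat \<Rightarrow> (nat \<Rightarrow> bool) set \<Rightarrow> bool" where
  "subspace n W \<longleftrightarrow> W \<subseteq> vecs n \<and> vzero \<in> W \<and> (\<forall>x\<in>W. \<forall>y\<in>W. vadd x y \<in> W)"

definition dim :: "(nat \<Rightarrow> bool) set \<Rightarrow> nat" where
  "dim W = (THE d. card W = 2 ^ d)"

definition block :: "nat \<Rightarrow> nat \<Rightarrow> nat \<Rightarrow> (nat \<Rightarrow> bool) set" where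
  "block m b i = {x \<in> vecs (m * b). \<forall>k. x k \<longrightarrow> k div m = i}"

definition proj :: "nat \<Rightarrow> nat \<Rightarrow> (nat \<Rightarrow> bool) \<Rightarrow> (nat \<Rightarrow> bool)" where
  "proj m i x = (\<lambda>j. if j < m then x (i * m + j) else False)"

definition parallel :: "nat \<Rightarrow> nat \<Rightarrow> (nat \<Rightarrow> (nat \<Rightarrow> bool) \<Rightarrow> (nat \<Rightarrow> bool))
    \<Rightarrow> (nat \<Rightarrow> bool) \<Rightarrow> (nat \<Rightarrow> bool)" where
  "parallel m b g x = (\<lambda>k. if k < m * b then g (k div m) (proj m (k div m) x) (k mod m) else False)"

definition wall :: "nat \<Rightarrow> nat \<Rightarrow> (nat \<Rightarrow> bool) set \<Rightarrow> bool" where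
  "wall m b W \<longleftrightarrow> (\<exists>I. I \<noteq> {} \<and> I \<subset> {..<b} \<and>
      W = {x \<in> vecs (m * b). \<forall>k. x k \<longrightarrow> k div m \<in> I})"

definition JU :: "nat \<Rightarrow> nat \<Rightarrow> (nat \<Rightarrow> bool) set \<Rightarrow> nat set" where
  "JU m b U = {j. j < b \<and> block m b j \<inter> U \<subset> block m b j}"

definition hyperplane :: "nat \<Rightarrow> (nat \<Rightarrow> bool) set \<Rightarrow> bool" where
  "hyperplane n U \<longleftrightarrow> subspace n U \<and> dim U = n - 1"

definition diff_uniform :: "nat \<Rightarrow> ((nat \<Rightarrow> bool) \<Rightarrow> (nat \<Rightarrow> bool)) \<Rightarrow> nat \<Rightarrow> bool" where
  "diff_uniform m f \<delta> \<longleftrightarrow>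
     \<delta> = Max {card {x \<in> vecs m. vadd (f (vadd x a)) (f x) = c} | a c.
                a \<in> vecs m \<and> a \<noteq> vzero \<and> c \<in> vecs m}"

definition strongly_anti_invariant :: "nat \<Rightarrow> nat \<Rightarrow> ((nat \<Rightarrow> bool) \<Rightarrow> (nat \<Rightarrow> bool)) \<Rightarrow> bool" where
  "strongly_anti_invariant m r f \<longleftrightarrow> f vzero = vzero \<and> 1 \<le> r \<and> r < m \<and>
     (\<forall>A B. subspace m A \<and> subspace m B \<and> f ` A = B \<longrightarrow>
        (dim A = dim B \<and> dim A < m - r) \<or> (A = vecs m \<and> B = vecs m))"

definition coset :: "(nat \<Rightarrow> bool) set \<Rightarrow> (nat \<Rightarrow> bool) \<Rightarrow> (nat \<Rightarrow> bool) set" where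
  "coset W v = (\<lambda>w. vadd w v) ` W"

definition lin_part :: "nat \<Rightarrow> (nat \<Rightarrow> bool) set \<Rightarrow> (nat \<Rightarrow> bool) set set" where
  "lin_part n W = {coset W v | v. v \<in> vecs n}"

definition LA :: "nat \<Rightarrow> (nat \<Rightarrow> bool) set \<Rightarrow> (nat \<Rightarrow> bool) set \<Rightarrow> (nat \<Rightarrow> bool) set
    \<Rightarrow> (nat \<Rightarrow> bool) set set" where
  "LA n U W1 W2 = (let vbar = (SOME v. v \<in> vecs n - U) in
     {coset W1 v | v. v \<in> U} \<union> {coset (coset W2 vbar) v | v. v \<in> U})"

definition trivial_partition :: "nat \<Rightarrow> (nat \<Rightarrow> bool) set set \<Rightarrow> bool" where
  "trivial_partition n P \<longleftrightarrow> P = {{v} | v. v \<in> vecs n} \<or> P = {vecs n}"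

definition maps_onto :: "((nat \<Rightarrow> bool) \<Rightarrow> (nat \<Rightarrow> bool)) \<Rightarrow> (nat \<Rightarrow> bool) set set
    \<Rightarrow> (nat \<Rightarrow> bool) set set \<Rightarrow> bool" where
  "maps_onto f A B \<longleftrightarrow> (\<lambda>X. f ` X) ` A = B"

end

(* Write G for the parallel map. Since G maps LA_U(W1|W2) onto LA_U'(W1'|W2') and fixes 0,
   it maps W1 onto W1', and each component g_i maps the projection and the slice of W1 on the
   block V_i onto those of W1'.

   On a block V_j with j in J_U - J_U', the trace of U splits V_j, and g_j maps the cosets of
   pr_j W1 (inside the trace) and of pr_j W2 (outside it) onto cosets of pr_j W1'. So the
   derivatives of the inverse of g_j in the nonzero directions of pr_j W1' take their values
   in (pr_j W1 \<union> pr_j W2) - {0}, fewer than 2 |pr_j W1'| values. By differential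
   2^r-uniformity they take at least 2^(m-r) values, and strong r-anti-invariance of g_j
   gives 2 |pr_j W1'| <= 2^(m-r), pr_j W1 being a proper subspace; hence pr_j W1 = 0. Applying the same argument to the
   inverse map, W1 has no component on any block with index in J_U or J_U'.

   On a block V_i contained in U and U' with pr_i W1 <> 0, a derivative of g_i lands in a
   coset of the image of the slice of W1, so by the same counting the slice is all of V_i.
   Hence W1 = W1' is the direct sum of the blocks it meets, a wall. Finally G acts on
   W1 + e, for e in a block of J_U outside U, as a translation, so W2 + e and W1 + e have the
   same image and W2 = W1; symmetrically W2' = W1'. *)
theory Submission
  imports Defs
begin

subsection \<open>Vectors over \<open>\<bbbF>\<^sub>2\<close>\<close>

lemma vadd_commute: "vadd x y = vadd y x"
  by (auto simp: vadd_def)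

lemma vadd_assoc: "vadd (vadd x y) z = vadd x (vadd y z)"
  by (auto simp: vadd_def)

lemma vadd_left_commute: "vadd x (vadd y z) = vadd y (vadd x z)"
  by (auto simp: vadd_def)

lemmas vadd_ac = vadd_assoc vadd_commute vadd_left_commute

lemma vadd_self [simp]: "vadd x x = vzero"
  by (auto simp: vadd_def vzero_def)

lemma vadd_vzero [simp]: "vadd x vzero = x" "vadd vzero x = x"
  by (auto simp: vadd_def vzero_def)

lemma vadd_cancel [simp]:
  "vadd (vadd x y) y = x" "vadd x (vadd x y) = y" "vadd (vadd y x) y = x" "vadd x (vadd y x) = y"
  by (auto simp: vadd_def)

lemma vadd_eq_self_iff [simp]:
  "vadd x y = y \<longleftrightarrow> x = vzero" "vadd y x = y \<longleftrightarrow> x = vzero"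
  "y = vadd x y \<longleftrightarrow> x = vzero" "y = vadd y x \<longleftrightarrow> x = vzero"
  by (auto simp: vadd_def vzero_def fun_eq_iff)

lemma vadd_right_cancel_iff: "vadd y x = vadd z x \<longleftrightarrow> y = z"
  by (metis vadd_cancel(1))

lemma vadd_eq_vzero_iff: "vadd x y = vzero \<longleftrightarrow> x = y"
  by (metis vadd_cancel(1) vadd_self vadd_vzero(2))

lemma vadd_in_vecs [intro]: "x \<in> vecs n \<Longrightarrow> y \<in> vecs n \<Longrightarrow> vadd x y \<in> vecs n"
  by (auto simp: vecs_def vadd_def)

lemma vzero_in_vecs [simp, intro]: "vzero \<in> vecs n"
  by (auto simp: vecs_def vzero_def)

lemma vecs_eq_image_Pow: "vecs n = (\<lambda>S k. k \<in> S) ` Pow {..<n}"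
proof (intro equalityI subsetI)
  fix x assume "x \<in> vecs n"
  then have "{k. x k} \<in> Pow {..<n}" by (auto simp: vecs_def not_less[symmetric])
  then show "x \<in> (\<lambda>S k. k \<in> S) ` Pow {..<n}" by (intro image_eqI[of _ _ "{k. x k}"]) auto
qed (auto simp: vecs_def)

lemma finite_vecs [simp, intro]: "finite (vecs n)"
  by (simp add: vecs_eq_image_Pow)

lemma card_vecs: "card (vecs n) = 2 ^ n"
proof -
  have "inj_on (\<lambda>S k. k \<in> S) (Pow {..<n})"
    by (rule inj_onI) (metis Collect_mem_eq)
  then show ?thesis by (simp add: vecs_eq_image_Pow card_image card_Pow)
qed

lemma vecs_nth_less: "x \<in> vecs n \<Longrightarrow> x k \<Longrightarrow> k < n"
  by (auto simp: vecs_def not_le[symmetric])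

lemma card_le_mult_card_image:
  assumes "finite S" and fibres: "\<And>c. card {x \<in> S. F x = c} \<le> k"
  shows "card S \<le> k * card (F ` S)"
proof -
  have "card S = card (\<Union>c\<in>F ` S. {x \<in> S. F x = c})"
    by (rule arg_cong[of _ _ card]) auto
  also have "\<dots> \<le> (\<Sum>c\<in>F ` S. card {x \<in> S. F x = c})"
    using card_UN_le assms(1) by blast
  also have "\<dots> \<le> (\<Sum>c\<in>F ` S. k)"
    by (rule sum_mono) (rule fibres)
  finally show ?thesis by (simp add: mult.commute)
qed

subsection \<open>Cosets and subspaces\<close>

lemma mem_coset_iff: "z \<in> coset W v \<longleftrightarrow> vadd z v \<in> W"
  unfolding coset_def by (auto intro: image_eqI[of _ _ "vadd z v"])

lemma coset_vzero [simp]: "coset W vzero = W"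
  by (simp add: coset_def)

lemma coset_coset: "coset (coset W a) v = coset W (vadd a v)"
  unfolding coset_def image_image vadd_assoc ..

lemma card_coset: "card (coset W v) = card W"
  unfolding coset_def by (rule card_image) (auto simp: inj_on_def vadd_right_cancel_iff)

lemma coset_subset_vecs: "W \<subseteq> vecs n \<Longrightarrow> v \<in> vecs n \<Longrightarrow> coset W v \<subseteq> vecs n"
  by (auto simp: coset_def)

lemma coset_cancel: "coset A v = coset B v \<Longrightarrow> A = B"
  by (simp add: set_eq_iff mem_coset_iff) (metis vadd_cancel(1))

lemma subspace_vzero: "subspace n W \<Longrightarrow> vzero \<in> W"
  by (simp add: subspace_def)

lemma subspace_vadd: "subspace n W \<Longrightarrow> x \<in> W \<Longrightarrow> y \<in> W \<Longrightarrow> vadd x y \<in> W"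
  by (simp add: subspace_def)

lemma subspace_subset_vecs: "subspace n W \<Longrightarrow> W \<subseteq> vecs n"
  by (simp add: subspace_def)

lemma finite_subspace: "subspace n W \<Longrightarrow> finite W"
  using finite_subset subspace_subset_vecs by blast

lemma subspace_vadd_iff: "subspace n W \<Longrightarrow> x \<in> W \<Longrightarrow> vadd x y \<in> W \<longleftrightarrow> y \<in> W"
  by (metis subspace_vadd vadd_cancel(2))

lemma mem_coset_self: "subspace n W \<Longrightarrow> v \<in> coset W v"
  by (simp add: mem_coset_iff subspace_vzero)

lemma coset_eq_coset: "subspace n W \<Longrightarrow> y \<in> coset W v \<Longrightarrow> coset W y = coset W v"
proof -
  assume W: "subspace n W" and "y \<in> coset W v"
  then have yv: "vadd y v \<in> W" by (simp add: mem_coset_iff)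
  have "vadd z y = vadd (vadd y v) (vadd z v)" for z by (auto simp: vadd_def)
  then show ?thesis
    unfolding set_eq_iff mem_coset_iff using subspace_vadd_iff[OF W yv] by simp
qed

lemma mem_coset_subspace_iff:
  "subspace n U \<Longrightarrow> W \<subseteq> U \<Longrightarrow> y \<in> coset W x \<Longrightarrow> y \<in> U \<longleftrightarrow> x \<in> U"
  by (metis mem_coset_iff subsetD subspace_vadd_iff vadd_commute)

lemma card_subspace_power_of_two: "subspace n W \<Longrightarrow> \<exists>d. card W = 2 ^ d"
proof (induction n arbitrary: W)
  case 0
  then have "W = {vzero}" by (auto simp: subspace_def vecs_def vzero_def)
  then show ?case by (intro exI[of _ 0]) simp
next
  case (Suc n)
  define W0 where "W0 = {x \<in> W. \<not> x n}"
  have "subspace n W0"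
    using Suc.prems unfolding subspace_def W0_def vecs_def
    by (auto simp: vzero_def vadd_def) (metis Suc_leI le_neq_implies_less subsetD mem_Collect_eq)
  then obtain d where d: "card W0 = 2 ^ d" and fin: "finite W0"
    using Suc.IH finite_subspace by blast
  show ?case
  proof (cases "\<exists>v\<in>W. v n")
    case False
    then have "W = W0" by (auto simp: W0_def)
    then show ?thesis using d by blast
  next
    case True
    then obtain v where v: "v \<in> W" "v n" by blast
    \<comment> \<open>the vectors of \<open>W\<close> with \<open>n\<close>-th coordinate set form the coset \<open>W0 + v\<close>\<close>
    have "W = W0 \<union> coset W0 v"
    proof (intro equalityI subsetI)
      fix x assume x: "x \<in> W"
      show "x \<in> W0 \<union> coset W0 v"
        using subspace_vadd[OF Suc.prems x v(1)] v(2) x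
        by (cases "x n") (auto simp: W0_def mem_coset_iff vadd_def)
    next
      fix x assume "x \<in> W0 \<union> coset W0 v"
      then show "x \<in> W"
        using subspace_vadd_iff[OF Suc.prems v(1), of x]
        by (auto simp: W0_def mem_coset_iff vadd_commute)
    qed
    moreover have "W0 \<inter> coset W0 v = {}"
      using v by (auto simp: W0_def mem_coset_iff vadd_def)
    ultimately have "card W = 2 ^ Suc d"
      using fin d card_coset[of W0 v] by (simp add: card_Un_disjoint coset_def)
    then show ?thesis by blast
  qed
qed

lemma card_subspace: "subspace n W \<Longrightarrow> card W = 2 ^ dim W"
proof -
  assume "subspace n W"
  then obtain d where d: "card W = 2 ^ d" using card_subspace_power_of_two by blast
  then have "dim W = d" unfolding dim_def by (rule the_equality) (auto simp: d power_inject_exp)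
  then show ?thesis using d by simp
qed

lemma hyperplane_neq_vecs: "hyperplane n U \<Longrightarrow> 0 < n \<Longrightarrow> U \<noteq> vecs n"
  using card_subspace[of n U] card_vecs[of n] by (auto simp: hyperplane_def)

text \<open>A hyperplane and its complement are the two cosets of \<open>U\<close>, by counting.\<close>
lemma hyperplane_vadd_outside:
  assumes U: "hyperplane n U" and n: "0 < n"
    and u: "u \<in> vecs n" "u \<notin> U" and v: "v \<in> vecs n" "v \<notin> U"
  shows "vadd u v \<in> U"
proof -
  have sub: "subspace n U" and cU: "card U = 2 ^ (n - 1)"
    using U card_subspace by (auto simp: hyperplane_def)
  have fin: "finite U" using finite_subspace[OF sub] .
  have "U \<inter> coset U v = {}"
    using sub v by (auto simp: mem_coset_iff subspace_vadd_iff)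
  then have "card (U \<union> coset U v) = 2 ^ (n - 1) + 2 ^ (n - 1)"
    using fin cU card_coset[of U v] by (simp add: card_Un_disjoint coset_def)
  also have "\<dots> = card (vecs n)"
    using n by (cases n) (auto simp: card_vecs)
  finally have "U \<union> coset U v = vecs n"
    using coset_subset_vecs[of U n v] subspace_subset_vecs[OF sub] v
    by (intro card_subset_eq) auto
  then show ?thesis using u by (auto simp: mem_coset_iff)
qed


subsection \<open>Blocks and walls\<close>

definition block_emb :: "nat \<Rightarrow> nat \<Rightarrow> (nat \<Rightarrow> bool) \<Rightarrow> (nat \<Rightarrow> bool)" where
  "block_emb m i a = (\<lambda>k. k div m = i \<and> a (k mod m))"

lemma proj_nth [simp]: "0 < m \<Longrightarrow> proj m (k div m) x (k mod m) = x k"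
  by (simp add: proj_def mult.commute)

lemma proj_in_vecs [simp, intro]: "proj m i x \<in> vecs m"
  by (auto simp: proj_def vecs_def)

lemma proj_vadd: "proj m i (vadd x y) = vadd (proj m i x) (proj m i y)"
  by (auto simp: proj_def vadd_def)

lemma proj_vzero [simp]: "proj m i vzero = vzero"
  by (auto simp: proj_def vzero_def)

lemma proj_image_subspace: "subspace n W \<Longrightarrow> subspace m (proj m i ` W)"
  unfolding subspace_def by (auto simp: proj_vadd[symmetric] intro!: image_eqI[of _ _ vzero])

lemma div_less_of_vecs: "0 < m \<Longrightarrow> x \<in> vecs (m * b) \<Longrightarrow> x k \<Longrightarrow> k div m < b"
  by (metis vecs_nth_less div_less_iff_less_mult mult.commute)

lemma vecs_eqI:
  assumes m: "0 < m" and x: "x \<in> vecs (m * b)" and y: "y \<in> vecs (m * b)"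
    and eq: "\<And>i. i < b \<Longrightarrow> proj m i x = proj m i y"
  shows "x = y"
proof
  fix k
  show "x k = y k"
    using eq[of "k div m"] proj_nth[OF m, of k] div_less_of_vecs[OF m] x y by metis
qed

lemma proj_block_emb [simp]: "0 < m \<Longrightarrow> a \<in> vecs m \<Longrightarrow> proj m i (block_emb m i a) = a"
  by (rule ext) (auto simp: proj_def block_emb_def vecs_def)

lemma proj_block_emb_other: "l \<noteq> i \<Longrightarrow> proj m l (block_emb m i a) = vzero"
  by (auto simp: proj_def block_emb_def vzero_def)

lemma block_emb_proj: "0 < m \<Longrightarrow> block_emb m i (proj m i x) = (\<lambda>k. k div m = i \<and> x k)"
  by (auto simp: block_emb_def)

lemma block_emb_vadd: "block_emb m i (vadd a c) = vadd (block_emb m i a) (block_emb m i c)"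
  by (auto simp: block_emb_def vadd_def)

lemma block_emb_vzero [simp]: "block_emb m i vzero = vzero"
  by (auto simp: block_emb_def vzero_def)

lemma block_emb_in_vecs: "0 < m \<Longrightarrow> i < b \<Longrightarrow> block_emb m i a \<in> vecs (m * b)"
proof -
  assume m: "0 < m" and i: "i < b"
  have "k div m \<noteq> i" if "m * b \<le> k" for k
    using div_le_mono[OF that, of m] m i by simp
  then show ?thesis by (auto simp: vecs_def block_emb_def)
qed

lemma block_eq_image: "0 < m \<Longrightarrow> i < b \<Longrightarrow> block m b i = block_emb m i ` vecs m"
proof (intro equalityI subsetI)
  fix x assume m: "0 < m" and "x \<in> block m b i"
  then have "x = block_emb m i (proj m i x)"
    by (auto simp: block_def block_emb_proj)
  then show "x \<in> block_emb m i ` vecs m" by blast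
next
  fix x assume "0 < m" "i < b" "x \<in> block_emb m i ` vecs m"
  then show "x \<in> block m b i"
    using block_emb_in_vecs by (auto simp: block_def) (simp add: block_emb_def)
qed

lemma parallel_in_vecs: "parallel m b g v \<in> vecs (m * b)"
  by (auto simp: parallel_def vecs_def)

lemma proj_parallel:
  assumes m: "0 < m" and g: "g i ` vecs m \<subseteq> vecs m" and i: "i < b"
  shows "proj m i (parallel m b g v) = g i (proj m i v)"
proof
  fix j
  have "g i (proj m i v) \<in> vecs m" using g by blast
  moreover have "Suc i * m \<le> b * m" using i by (intro mult_le_mono1) simp
  then have "j < m \<Longrightarrow> i * m + j < m * b" by (simp add: mult.commute)
  ultimately show "proj m i (parallel m b g v) j = g i (proj m i v) j"
    by (auto simp: proj_def parallel_def vecs_def)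
qed

definition block_sum :: "nat \<Rightarrow> nat \<Rightarrow> nat set \<Rightarrow> (nat \<Rightarrow> bool) set" where
  "block_sum m b I = {x \<in> vecs (m * b). \<forall>k. x k \<longrightarrow> k div m \<in> I}"

definition block_support :: "nat \<Rightarrow> nat \<Rightarrow> (nat \<Rightarrow> bool) set \<Rightarrow> nat set" where
  "block_support m b W = {i. i < b \<and> proj m i ` W \<noteq> {vzero}}"

lemma block_sum_empty: "block_sum m b {} = {vzero}"
  unfolding block_sum_def by (auto simp: vzero_def vecs_def)

lemma block_sum_lessThan: "0 < m \<Longrightarrow> block_sum m b {..<b} = vecs (m * b)"
  by (auto simp: block_sum_def div_less_of_vecs)

lemma proj_block_sum_outside: "x \<in> block_sum m b I \<Longrightarrow> j \<notin> I \<Longrightarrow> proj m j x = vzero"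
  by (rule ext) (auto simp: block_sum_def proj_def vzero_def)

lemma subset_block_sum_support:
  assumes m: "0 < m" and S: "S \<subseteq> vecs (m * b)"
  shows "S \<subseteq> block_sum m b (block_support m b S)"
proof
  fix x assume x: "x \<in> S"
  have "k div m < b \<and> proj m (k div m) ` S \<noteq> {vzero}" if "x k" for k
  proof
    show "k div m < b" using that x S div_less_of_vecs[OF m] by blast
    have "proj m (k div m) x \<noteq> vzero"
      using that proj_nth[OF m, of k x] by (auto simp: vzero_def)
    then show "proj m (k div m) ` S \<noteq> {vzero}" using x by blast
  qed
  then show "x \<in> block_sum m b (block_support m b S)"
    using x S by (auto simp: block_sum_def block_support_def)
qed

lemma block_sum_subset:
  assumes m: "0 < m" and S: "subspace (m * b) S"
    and blocks: "\<And>i. i \<in> I \<Longrightarrow> i < b \<Longrightarrow> block m b i \<subseteq> S"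
  shows "block_sum m b I \<subseteq> S"
proof
  fix x assume x: "x \<in> block_sum m b I"
  then have xv: "x \<in> vecs (m * b)" and xI: "\<And>k. x k \<Longrightarrow> k div m \<in> I"
    by (auto simp: block_sum_def)
  \<comment> \<open>add the blocks of \<open>x\<close> one at a time\<close>
  have "(\<lambda>k. x k \<and> k div m < t) \<in> S" for t
  proof (induction t)
    case 0
    then show ?case using subspace_vzero[OF S] by (simp add: vzero_def)
  next
    case (Suc t)
    have split: "(\<lambda>k. x k \<and> k div m < Suc t) = vadd (\<lambda>k. x k \<and> k div m < t) (block_emb m t (proj m t x))"
      using m by (auto simp: block_emb_proj vadd_def)
    have "block_emb m t (proj m t x) \<in> S"
    proof (cases "t \<in> I \<and> t < b")
      case True
      then show ?thesis using blocks block_eq_image[OF m] by blast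
    next
      case False
      then have "block_emb m t (proj m t x) = vzero"
        using m xI div_less_of_vecs[OF m xv] by (auto simp: block_emb_proj vzero_def)
      then show ?thesis using subspace_vzero[OF S] by simp
    qed
    then show ?case using split subspace_vadd[OF S Suc.IH] by simp
  qed
  moreover have "(\<lambda>k. x k \<and> k div m < b) = x"
    using div_less_of_vecs[OF m xv] by auto
  ultimately show "x \<in> S" by metis
qed


definition block_slice :: "nat \<Rightarrow> nat \<Rightarrow> (nat \<Rightarrow> bool) set \<Rightarrow> (nat \<Rightarrow> bool) set" where
  "block_slice m i W = {x \<in> vecs m. block_emb m i x \<in> W}"

lemma subspace_block_slice: "subspace n W \<Longrightarrow> subspace m (block_slice m i W)"
  by (auto simp: subspace_def block_slice_def block_emb_vadd)

lemma proj_image_coset: "proj m i ` coset W v = coset (proj m i ` W) (proj m i v)"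
  by (auto simp: coset_def image_image proj_vadd)

lemma block_subset_if_notin_JU: "i < b \<Longrightarrow> i \<notin> JU m b U \<Longrightarrow> block m b i \<subseteq> U"
  by (auto simp: JU_def)

lemma block_emb_notin_if_JU:
  "0 < m \<Longrightarrow> i < b \<Longrightarrow> i \<in> JU m b U \<Longrightarrow> \<exists>x\<in>vecs m. block_emb m i x \<notin> U"
  using block_eq_image by (auto simp: JU_def)

lemma block_emb_in_if_notin_JU:
  "0 < m \<Longrightarrow> i < b \<Longrightarrow> i \<notin> JU m b V \<Longrightarrow> a \<in> vecs m \<Longrightarrow> block_emb m i a \<in> V"
  using block_subset_if_notin_JU block_eq_image by blast

lemma JU_nonempty:
  assumes U: "hyperplane (m * b) U" and m: "0 < m" and b: "0 < b"
  shows "\<exists>j<b. j \<in> JU m b U"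
proof (rule ccontr)
  assume "\<not> (\<exists>j<b. j \<in> JU m b U)"
  then have "block_sum m b {..<b} \<subseteq> U"
    using U block_sum_subset[OF m] block_subset_if_notin_JU by (simp add: hyperplane_def)
  then show False
    using hyperplane_neq_vecs[OF U] m b U block_sum_lessThan[OF m]
    by (auto simp: hyperplane_def subspace_def)
qed


subsection \<open>Differentially uniform, anti-invariant permutations of one block\<close>

definition diff_uniform_le :: "nat \<Rightarrow> ((nat \<Rightarrow> bool) \<Rightarrow> (nat \<Rightarrow> bool)) \<Rightarrow> nat \<Rightarrow> bool" where
  "diff_uniform_le m f \<delta> \<longleftrightarrow> (\<forall>a\<in>vecs m. a \<noteq> vzero \<longrightarrow>
     (\<forall>c. card {x \<in> vecs m. vadd (f (vadd x a)) (f x) = c} \<le> \<delta>))"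

locale admissible_perm =
  fixes m r :: nat and f :: "(nat \<Rightarrow> bool) \<Rightarrow> (nat \<Rightarrow> bool)"
  assumes bij: "bij_betw f (vecs m) (vecs m)"
    and diff_uniform: "diff_uniform_le m f (2 ^ r)"
    and anti_invariant: "strongly_anti_invariant m r f"

lemma diff_uniform_imp_le:
  assumes bij: "bij_betw f (vecs m) (vecs m)" and du: "diff_uniform m f \<delta>"
  shows "diff_uniform_le m f \<delta>"
  unfolding diff_uniform_le_def
proof (intro ballI impI allI)
  fix a c assume a: "a \<in> vecs m" "a \<noteq> vzero"
  define F where "F a c = card {x \<in> vecs m. vadd (f (vadd x a)) (f x) = c}" for a c
  define S where "S = {F a c | a c. a \<in> vecs m \<and> a \<noteq> vzero \<and> c \<in> vecs m}"
  have "S \<subseteq> case_prod F ` (vecs m \<times> vecs m)"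
    unfolding S_def by (auto intro!: image_eqI[where x = "(_, _)"])
  then have "finite S" by (rule finite_subset) simp
  show "F a c \<le> \<delta>"
  proof (cases "c \<in> vecs m")
    case True
    then have "F a c \<in> S" using a by (auto simp: S_def)
    then show ?thesis using \<open>finite S\<close> du by (simp add: diff_uniform_def S_def F_def)
  next
    case False
    have "vadd (f (vadd x a)) (f x) \<in> vecs m" if "x \<in> vecs m" for x
      using bij a that by (auto simp: bij_betw_def)
    then have "{x \<in> vecs m. vadd (f (vadd x a)) (f x) = c} = {}"
      using False by blast
    then show ?thesis unfolding F_def by (metis card.empty zero_le)
  qed
qed

lemma diff_uniform_le_the_inv_into:
  assumes bij: "bij_betw f (vecs m) (vecs m)" and du: "diff_uniform_le m f \<delta>"
  shows "diff_uniform_le m (the_inv_into (vecs m) f) \<delta>"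
  unfolding diff_uniform_le_def
proof (intro ballI impI allI)
  define h where "h = the_inv_into (vecs m) f"
  have h_bij: "bij_betw h (vecs m) (vecs m)"
    unfolding h_def by (rule bij_betw_the_inv_into[OF bij])
  have fh: "\<And>y. y \<in> vecs m \<Longrightarrow> f (h y) = y"
    unfolding h_def using f_the_inv_into_f_bij_betw[OF bij] by blast
  have h_vecs: "\<And>y. y \<in> vecs m \<Longrightarrow> h y \<in> vecs m"
    using h_bij by (auto simp: bij_betw_def)
  fix t c assume t: "t \<in> vecs m" "t \<noteq> vzero"
  define Sh where "Sh = {y \<in> vecs m. vadd (h (vadd y t)) (h y) = c}"
  \<comment> \<open>\<open>h\<close> carries the fibre of \<open>h\<close> over \<open>c\<close> in direction \<open>t\<close> into the fibre of \<open>f\<close> over \<open>t\<close> in direction \<open>c\<close>\<close>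
  have "h ` Sh \<subseteq> {x \<in> vecs m. vadd (f (vadd x c)) (f x) = t}"
  proof
    fix x assume "x \<in> h ` Sh"
    then obtain y where y: "y \<in> vecs m" "x = h y" and c: "c = vadd (h (vadd y t)) (h y)"
      by (auto simp: Sh_def)
    have "f (vadd x c) = vadd y t"
      unfolding y(2) c using fh vadd_in_vecs[OF y(1) t(1)] by simp
    then show "x \<in> {x \<in> vecs m. vadd (f (vadd x c)) (f x) = t}"
      using y fh h_vecs by simp
  qed
  then have "card (h ` Sh) \<le> card {x \<in> vecs m. vadd (f (vadd x c)) (f x) = t}"
    by (intro card_mono) auto
  moreover have "card (h ` Sh) = card Sh"
    using h_bij by (intro card_image) (auto simp: Sh_def bij_betw_def inj_on_def)
  ultimately have le: "card Sh \<le> card {x \<in> vecs m. vadd (f (vadd x c)) (f x) = t}"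
    by simp
  show "card {y \<in> vecs m. vadd (h (vadd y t)) (h y) = c} \<le> \<delta>"
  proof (cases "Sh = {}")
    case False
    then obtain y where y: "y \<in> vecs m" "vadd (h (vadd y t)) (h y) = c"
      by (auto simp: Sh_def)
    have "c \<in> vecs m"
      using y h_vecs vadd_in_vecs[OF y(1) t(1)] by blast
    moreover have "c \<noteq> vzero"
    proof
      assume "c = vzero"
      then have "vadd y t = y"
        using y fh[of y] fh[OF vadd_in_vecs[OF y(1) t(1)]] by (metis vadd_eq_vzero_iff)
      then show False using t(2) by simp
    qed
    ultimately show ?thesis
      using le du unfolding Sh_def[symmetric] by (auto simp: diff_uniform_le_def intro: le_trans)
  qed (simp add: Sh_def[symmetric])
qed

lemma strongly_anti_invariant_the_inv_into:
  assumes bij: "bij_betw f (vecs m) (vecs m)" and sai: "strongly_anti_invariant m r f"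
  shows "strongly_anti_invariant m r (the_inv_into (vecs m) f)"
  unfolding strongly_anti_invariant_def
proof (intro conjI allI impI)
  define h where "h = the_inv_into (vecs m) f"
  have fh: "\<And>y. y \<in> vecs m \<Longrightarrow> f (h y) = y"
    unfolding h_def using f_the_inv_into_f_bij_betw[OF bij] by blast
  show "the_inv_into (vecs m) f vzero = vzero"
    using the_inv_into_f_f[of f "vecs m" vzero] bij sai
    by (simp add: bij_betw_def strongly_anti_invariant_def)
  show "1 \<le> r" "r < m" using sai by (simp_all add: strongly_anti_invariant_def)
  fix A B assume AB: "subspace m A \<and> subspace m B \<and> the_inv_into (vecs m) f ` A = B"
  have "f ` B = (\<lambda>y. f (h y)) ` A" using AB by (auto simp: image_image h_def)
  also have "\<dots> = (\<lambda>y. y) ` A"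
    by (rule image_cong) (use AB fh subspace_subset_vecs[of m A] in auto)
  finally have "f ` B = A" by simp
  then have "(dim B = dim A \<and> dim B < m - r) \<or> (B = vecs m \<and> A = vecs m)"
    using sai AB unfolding strongly_anti_invariant_def by blast
  then show "(dim A = dim B \<and> dim A < m - r) \<or> (A = vecs m \<and> B = vecs m)"
    by auto
qed

lemma (in admissible_perm) admissible_perm_inv:
  "admissible_perm m r (the_inv_into (vecs m) f)"
  using bij_betw_the_inv_into[OF bij] diff_uniform_le_the_inv_into[OF bij diff_uniform]
    strongly_anti_invariant_the_inv_into[OF bij anti_invariant]
  by (rule admissible_perm.intro)

context admissible_perm
begin

lemma admissible_in_vecs: "x \<in> vecs m \<Longrightarrow> f x \<in> vecs m"
  using bij by (auto simp: bij_betw_def)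

lemma admissible_inj: "inj_on f (vecs m)"
  using bij by (auto simp: bij_betw_def)

lemma admissible_vzero: "f vzero = vzero"
  using anti_invariant by (simp add: strongly_anti_invariant_def)

lemma admissible_eq_vzero_iff: "x \<in> vecs m \<Longrightarrow> f x = vzero \<longleftrightarrow> x = vzero"
  by (metis admissible_inj admissible_vzero inj_onD vzero_in_vecs)

lemma card_derivative_image:
  assumes "a \<in> vecs m" "a \<noteq> vzero"
  shows "2 ^ m \<le> 2 ^ r * card ((\<lambda>x. vadd (f (vadd x a)) (f x)) ` vecs m)"
proof -
  have "card {x \<in> vecs m. vadd (f (vadd x a)) (f x) = c} \<le> 2 ^ r" for c
    using diff_uniform assms by (simp add: diff_uniform_le_def)
  from card_le_mult_card_image[OF finite_vecs this] show ?thesis by (simp add: card_vecs)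
qed

lemma admissible_image_proper_subspace:
  assumes A: "subspace m A" and A': "subspace m A'" and fA: "f ` A = A'"
    and proper: "A \<noteq> vecs m"
  shows "card A = card A'" and "2 ^ r * card A' \<le> 2 ^ (m - 1)"
proof -
  have "dim A = dim A'" "r + dim A' \<le> m - 1"
    using anti_invariant A A' fA proper by (auto simp: strongly_anti_invariant_def)
  then show "card A = card A'" "2 ^ r * card A' \<le> 2 ^ (m - 1)"
    using card_subspace[OF A] card_subspace[OF A'] by (auto simp: power_add[symmetric])
qed

lemma power_pred_less: "(2::nat) ^ (m - 1) < 2 ^ m"
  using anti_invariant by (simp add: strongly_anti_invariant_def)

text \<open>A derivative of \<open>f\<close> takes at least \<open>2 ^ (m - r)\<close> values, more than a coset of the image
  of a proper subspace can hold.\<close>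
lemma derivative_in_coset_imp_full:
  assumes a: "a \<in> vecs m" "a \<noteq> vzero"
    and A: "subspace m A" and A': "subspace m A'" and fA: "f ` A = A'"
    and deriv: "\<And>x. x \<in> vecs m \<Longrightarrow> vadd (vadd (f (vadd a x)) (f x)) (f a) \<in> A'"
  shows "A = vecs m"
proof (rule ccontr)
  assume proper: "A \<noteq> vecs m"
  let ?D = "(\<lambda>x. vadd (f (vadd x a)) (f x)) ` vecs m"
  have "?D \<subseteq> coset A' (f a)"
    using deriv by (auto simp: mem_coset_iff vadd_commute)
  moreover have "finite (coset A' (f a))"
    using finite_subspace[OF A'] by (simp add: coset_def)
  ultimately have "card ?D \<le> card (coset A' (f a))"
    by (simp add: card_mono)
  then have "card ?D \<le> card A'"
    by (simp add: card_coset)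
  then have "2 ^ m \<le> 2 ^ r * card A'"
    using card_derivative_image[OF a] mult_le_mono2 le_trans by blast
  then show False
    using admissible_image_proper_subspace(2)[OF A A' fA proper] power_pred_less by linarith
qed

abbreviation f_inv :: "(nat \<Rightarrow> bool) \<Rightarrow> (nat \<Rightarrow> bool)" where
  "f_inv \<equiv> the_inv_into (vecs m) f"

lemma f_f_inv: "y \<in> vecs m \<Longrightarrow> f (f_inv y) = y"
  using f_the_inv_into_f_bij_betw[OF bij] by blast

lemma f_inv_f: "x \<in> vecs m \<Longrightarrow> f_inv (f x) = x"
  by (simp add: the_inv_into_f_f[OF admissible_inj])

text \<open>\<open>f_inv\<close> maps the coset \<open>P' + y\<close> into \<open>R x + x\<close>, \<open>x = f_inv y\<close>.\<close>
lemma inv_derivative_image_subset: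
  assumes P: "subspace m P" and Q: "subspace m Q" and R: "\<And>x. R x = P \<or> R x = Q"
    and cosets: "\<And>x. x \<in> vecs m \<Longrightarrow> f ` coset (R x) x = coset P' (f x)"
    and t: "t \<in> P'" "t \<noteq> vzero"
  shows "(\<lambda>y. vadd (f_inv (vadd y t)) (f_inv y)) ` vecs m \<subseteq> (P \<union> Q) - {vzero}"
proof
  fix z assume "z \<in> (\<lambda>y. vadd (f_inv (vadd y t)) (f_inv y)) ` vecs m"
  then obtain y where y: "y \<in> vecs m" and z: "z = vadd (f_inv (vadd y t)) (f_inv y)" by blast
  define x where "x = f_inv y"
  have x: "x \<in> vecs m" "f x = y"
    using admissible_perm.admissible_in_vecs[OF admissible_perm_inv] y f_f_inv by (auto simp: x_def)
  have "vadd t y \<in> coset P' (f x)" using t x by (simp add: mem_coset_iff)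
  then have "vadd t y \<in> f ` coset (R x) x" using cosets[OF x(1)] by (simp only:)
  then obtain w where w: "w \<in> coset (R x) x" "f w = vadd t y" by (auto elim!: imageE)
  have "R x \<subseteq> vecs m" using R[of x] subspace_subset_vecs[OF P] subspace_subset_vecs[OF Q] by auto
  then have "w \<in> vecs m" using w(1) coset_subset_vecs[OF _ x(1)] by blast
  then have w_eq: "f_inv (vadd y t) = w" using f_inv_f[of w] w(2) by (simp add: vadd_commute)
  then have "z \<in> R x" using w(1) z by (simp add: x_def mem_coset_iff)
  moreover have "z \<noteq> vzero"
    using w_eq w(2) x t z by (auto simp: x_def vadd_eq_vzero_iff)
  ultimately show "z \<in> (P \<union> Q) - {vzero}" using R[of x] by auto
qed

text \<open>The heart of the argument: by the previous lemma the derivatives of \<open>f_inv\<close> in the nonzero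
  directions of \<open>P' = f ` P\<close> take fewer than \<open>2 * card P'\<close> values, too few for differential
  uniformity since \<open>P\<close> is proper.\<close>
lemma maps_cosets_imp_trivial:
  assumes P: "subspace m P" and Q: "subspace m Q" and P': "subspace m P'" and fP: "f ` P = P'"
    and proper: "P \<noteq> vecs m" and card_Q: "card Q = card P'"
    and R: "\<And>x. R x = P \<or> R x = Q"
    and cosets: "\<And>x. x \<in> vecs m \<Longrightarrow> f ` coset (R x) x = coset P' (f x)"
  shows "P = {vzero}"
proof -
  have card_P: "card P = card P'" and small: "2 ^ r * card P' \<le> 2 ^ (m - 1)"
    using admissible_image_proper_subspace[OF P P' fP proper] by auto
  have fin: "finite P" "finite Q" using P Q finite_subspace by blast+
  have "t = vzero" if t: "t \<in> P'" for t
  proof (rule ccontr)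
    assume t0: "t \<noteq> vzero"
    have tv: "t \<in> vecs m" using t P' subspace_subset_vecs by blast
    let ?D = "(\<lambda>y. vadd (f_inv (vadd y t)) (f_inv y)) ` vecs m"
    have "card ?D \<le> card ((P \<union> Q) - {vzero})"
      using inv_derivative_image_subset[OF P Q R cosets t t0] fin by (intro card_mono) auto
    also have "\<dots> \<le> 2 * card P' - 2"
    proof -
      have "vzero \<in> P \<inter> Q" using P Q subspace_vzero by blast
      then have "card (P \<union> Q) + 1 \<le> card P + card Q"
        using card_Un_Int[OF fin] fin card_gt_0_iff[of "P \<inter> Q"] by fastforce
      then show ?thesis
        using \<open>vzero \<in> P \<inter> Q\<close> fin card_P card_Q by (simp add: card_Diff_singleton)
    qed
    finally have card_D: "card ?D \<le> 2 * card P' - 2" .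
    have "card P' \<noteq> 0" using subspace_vzero[OF P'] finite_subspace[OF P'] by auto
    have "2 ^ m \<le> 2 ^ r * card ?D"
      by (rule admissible_perm.card_derivative_image[OF admissible_perm_inv tv t0])
    also have "\<dots> \<le> 2 ^ r * (2 * card P' - 2)" using card_D by (rule mult_le_mono2)
    also have "\<dots> < 2 ^ r * (2 * card P')" using \<open>card P' \<noteq> 0\<close> by (intro mult_less_mono2) auto
    also have "\<dots> \<le> 2 * 2 ^ (m - 1)" using small by simp
    also have "\<dots> = 2 ^ m" using power_pred_less by (cases m) auto
    finally show False by simp
  qed
  then have "P' = {vzero}" using subspace_vzero[OF P'] by blast
  then show ?thesis
    using fP admissible_eq_vzero_iff subspace_subset_vecs[OF P] subspace_vzero[OF P] by blast
qed

text \<open>This is the situation on a block \<open>V\<^sub>j\<close> with \<open>j \<in> JU m b U - JU m b U'\<close>: \<open>H\<close> is the trace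
  of \<open>U\<close> on \<open>V\<^sub>j\<close>, and \<open>P\<close>, \<open>Q\<close>, \<open>P'\<close> are the projections of \<open>W1\<close>, \<open>W2\<close>, \<open>W1'\<close> to \<open>V\<^sub>j\<close>.\<close>
lemma maps_split_cosets_imp_trivial:
  assumes H: "subspace m H" and xo: "xo \<in> vecs m" "xo \<notin> H"
    and H_compl: "\<And>x y. x \<in> vecs m \<Longrightarrow> x \<notin> H \<Longrightarrow> y \<in> vecs m \<Longrightarrow> y \<notin> H \<Longrightarrow> vadd x y \<in> H"
    and P: "subspace m P" and Q: "subspace m Q" and P': "subspace m P'" and fP: "f ` P = P'"
    and A: "subspace m A" "A \<subseteq> H" and A': "subspace m A'" and fA: "f ` A = A'"
    and cosets: "\<And>x. x \<in> vecs m \<Longrightarrow> f ` coset (if x \<in> H then P else Q) x = coset P' (f x)"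
    and deriv: "\<And>a x. a \<in> P \<Longrightarrow> x \<in> H \<Longrightarrow> vadd (vadd (f (vadd a x)) (f x)) (f a) \<in> A'"
  shows "P = {vzero}"
proof (rule maps_cosets_imp_trivial[OF P Q P' fP _ _ _ cosets])
  show "P \<noteq> vecs m"
  proof
    assume P_full: "P = vecs m"
    have "A = vecs m"
    proof (rule derivative_in_coset_imp_full[OF xo(1) _ A(1) A' fA])
      show "xo \<noteq> vzero" using xo(2) subspace_vzero[OF H] by auto
      fix x assume x: "x \<in> vecs m"
      show "vadd (vadd (f (vadd xo x)) (f x)) (f xo) \<in> A'"
      proof (cases "x \<in> H")
        case True
        then show ?thesis using deriv[of xo x] P_full xo(1) by simp
      next
        case False
        \<comment> \<open>the derivative in direction \<open>xo\<close> is invariant under \<open>x \<mapsto> x + xo\<close>, which moves \<open>x\<close> into \<open>H\<close>\<close>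
        then have "vadd x xo \<in> H" using H_compl[OF x False xo] by simp
        then have "vadd (vadd (f (vadd xo (vadd x xo))) (f (vadd x xo))) (f xo) \<in> A'"
          using deriv[of xo "vadd x xo"] P_full xo(1) by simp
        then show ?thesis by (simp add: vadd_ac)
      qed
    qed
    then show False using A(2) xo by auto
  qed
  have "coset Q xo \<subseteq> vecs m"
    using coset_subset_vecs[OF subspace_subset_vecs[OF Q] xo(1)] .
  then have "card (f ` coset Q xo) = card Q"
    using card_image[OF inj_on_subset[OF admissible_inj]] card_coset by metis
  then show "card Q = card P'"
    using cosets[OF xo(1)] xo(2) card_coset by simp
qed simp

end


subsection \<open>The partitions \<open>LA\<^sub>U(W\<^sub>1|W\<^sub>2)\<close>\<close>

text \<open>The block of \<open>LA\<^sub>U(W\<^sub>1|W\<^sub>2)\<close> containing \<open>x\<close>; unlike \<open>LA\<close> itself it does not mention the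
  representative \<open>vbar\<close> of \<open>V - U\<close>.\<close>
definition LA_block :: "(nat \<Rightarrow> bool) set \<Rightarrow> (nat \<Rightarrow> bool) set \<Rightarrow> (nat \<Rightarrow> bool) set
    \<Rightarrow> (nat \<Rightarrow> bool) \<Rightarrow> (nat \<Rightarrow> bool) set" where
  "LA_block U W1 W2 x = (if x \<in> U then coset W1 x else coset W2 x)"

locale LA_partition =
  fixes n :: nat and U W1 W2 :: "(nat \<Rightarrow> bool) set"
  assumes n_pos: "0 < n" and hyperplane: "hyperplane n U"
    and W1: "subspace n W1" and W2: "subspace n W2" and W1_U: "W1 \<subseteq> U" and W2_U: "W2 \<subseteq> U"
begin

lemma U: "subspace n U"
  using hyperplane by (simp add: hyperplane_def)

lemma LA_block_subset_vecs: "x \<in> vecs n \<Longrightarrow> LA_block U W1 W2 x \<subseteq> vecs n"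
  using coset_subset_vecs W1 W2 subspace_subset_vecs by (simp add: LA_block_def)

lemma mem_LA_block_self: "x \<in> LA_block U W1 W2 x"
  using mem_coset_self W1 W2 by (simp add: LA_block_def)

lemma LA_block_eq: "y \<in> LA_block U W1 W2 x \<Longrightarrow> LA_block U W1 W2 y = LA_block U W1 W2 x"
  using mem_coset_subspace_iff[OF U W1_U] mem_coset_subspace_iff[OF U W2_U]
    coset_eq_coset[OF W1] coset_eq_coset[OF W2]
  by (auto simp: LA_block_def split: if_splits)

lemma LA_eq_image: "LA n U W1 W2 = LA_block U W1 W2 ` vecs n"
proof -
  define vbar where "vbar = (SOME v. v \<in> vecs n - U)"
  have "\<exists>v. v \<in> vecs n - U"
    using hyperplane_neq_vecs[OF hyperplane n_pos] subspace_subset_vecs[OF U] by blast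
  then have vbar: "vbar \<in> vecs n" "vbar \<notin> U"
    unfolding vbar_def by (metis DiffD1 DiffD2 someI_ex)+
  have "{coset W1 v | v. v \<in> U} \<union> {coset (coset W2 vbar) v | v. v \<in> U} = LA_block U W1 W2 ` vecs n"
  proof (intro equalityI subsetI)
    fix X assume "X \<in> {coset W1 v | v. v \<in> U} \<union> {coset (coset W2 vbar) v | v. v \<in> U}"
    then obtain v where v: "v \<in> U" and "X = coset W1 v \<or> X = coset W2 (vadd vbar v)"
      by (auto simp: coset_coset)
    moreover have "vadd vbar v \<notin> U" using v vbar(2) subspace_vadd_iff[OF U] vadd_commute by metis
    moreover have "v \<in> vecs n" "vadd vbar v \<in> vecs n"
      using v vbar(1) subspace_subset_vecs[OF U] by auto
    ultimately show "X \<in> LA_block U W1 W2 ` vecs n"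
      by (auto simp: LA_block_def)
  next
    fix X assume "X \<in> LA_block U W1 W2 ` vecs n"
    then obtain x where x: "x \<in> vecs n" "X = LA_block U W1 W2 x" by blast
    show "X \<in> {coset W1 v | v. v \<in> U} \<union> {coset (coset W2 vbar) v | v. v \<in> U}"
    proof (cases "x \<in> U")
      case True
      then show ?thesis using x by (auto simp: LA_block_def)
    next
      case False
      then have "vadd vbar x \<in> U"
        using hyperplane_vadd_outside[OF hyperplane n_pos vbar x(1)] by simp
      moreover have "X = coset (coset W2 vbar) (vadd vbar x)"
        using x False by (simp add: LA_block_def coset_coset)
      ultimately show ?thesis by blast
    qed
  qed
  then show ?thesis by (simp add: LA_def vbar_def Let_def)
qed

lemma LA_eq_lin_part:
  assumes "W1 = W2" shows "LA n U W1 W2 = lin_part n W1"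
proof -
  have "LA_block U W1 W2 = coset W1" using assms by (auto simp: LA_block_def)
  then show ?thesis unfolding LA_eq_image lin_part_def by auto
qed

end

lemma maps_onto_LA_block:
  assumes "LA_partition n U W1 W2" and "LA_partition n U' W1' W2'"
    and F: "\<And>x. F x \<in> vecs n" and maps: "maps_onto F (LA n U W1 W2) (LA n U' W1' W2')"
    and x: "x \<in> vecs n"
  shows "F ` LA_block U W1 W2 x = LA_block U' W1' W2' (F x)"
proof -
  interpret LA: LA_partition n U W1 W2 by fact
  interpret LA': LA_partition n U' W1' W2' by fact
  have "F ` LA_block U W1 W2 x \<in> LA n U' W1' W2'"
    using maps x unfolding maps_onto_def LA.LA_eq_image by blast
  then obtain x' where "F ` LA_block U W1 W2 x = LA_block U' W1' W2' x'"
    unfolding LA'.LA_eq_image by blast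
  moreover have "F x \<in> F ` LA_block U W1 W2 x"
    using LA.mem_LA_block_self by blast
  ultimately show ?thesis using LA'.LA_block_eq by metis
qed

lemma LA_block_map_inverse:
  assumes "LA_partition n U W1 W2"
    and Fi_F: "\<And>x. x \<in> vecs n \<Longrightarrow> Fi (F x) = x" and F_Fi: "\<And>y. y \<in> vecs n \<Longrightarrow> F (Fi y) = y"
    and Fi: "\<And>y. Fi y \<in> vecs n"
    and F_block: "\<And>x. x \<in> vecs n \<Longrightarrow> F ` LA_block U W1 W2 x = LA_block U' W1' W2' (F x)"
    and y: "y \<in> vecs n"
  shows "Fi ` LA_block U' W1' W2' y = LA_block U W1 W2 (Fi y)"
proof -
  interpret LA: LA_partition n U W1 W2 by fact
  have "LA_block U' W1' W2' y = F ` LA_block U W1 W2 (Fi y)"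
    using F_block[OF Fi] F_Fi[OF y] by simp
  then have "Fi ` LA_block U' W1' W2' y = (\<lambda>z. Fi (F z)) ` LA_block U W1 W2 (Fi y)"
    by (simp add: image_image)
  also have "\<dots> = LA_block U W1 W2 (Fi y)"
    using LA.LA_block_subset_vecs[OF Fi] Fi_F by (auto intro: image_cong simp: subset_iff)
  finally show ?thesis .
qed


subsection \<open>Parallel maps\<close>

locale parallel_perm =
  fixes m b r :: nat and g :: "nat \<Rightarrow> (nat \<Rightarrow> bool) \<Rightarrow> (nat \<Rightarrow> bool)"
  assumes m_pos: "0 < m" and admissible: "\<And>i. i < b \<Longrightarrow> admissible_perm m r (g i)"
begin

abbreviation G :: "(nat \<Rightarrow> bool) \<Rightarrow> (nat \<Rightarrow> bool)" where
  "G \<equiv> parallel m b g"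

lemma g_in_vecs: "i < b \<Longrightarrow> x \<in> vecs m \<Longrightarrow> g i x \<in> vecs m"
  using admissible admissible_perm.admissible_in_vecs by blast

lemma g_vzero: "i < b \<Longrightarrow> g i vzero = vzero"
  using admissible admissible_perm.admissible_vzero by blast

lemma proj_G: "i < b \<Longrightarrow> proj m i (G v) = g i (proj m i v)"
  using proj_parallel[OF m_pos] g_in_vecs by blast

lemma G_eqI: "y \<in> vecs (m * b) \<Longrightarrow> (\<And>i. i < b \<Longrightarrow> g i (proj m i x) = proj m i y) \<Longrightarrow> G x = y"
  using vecs_eqI[OF m_pos parallel_in_vecs] proj_G by metis

lemma G_vzero: "G vzero = vzero"
  by (rule G_eqI) (simp_all add: g_vzero)

lemma G_block_emb: "a \<in> vecs m \<Longrightarrow> i < b \<Longrightarrow> G (block_emb m i a) = block_emb m i (g i a)"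
proof (rule G_eqI)
  assume a: "a \<in> vecs m" and i: "i < b"
  show "block_emb m i (g i a) \<in> vecs (m * b)" by (rule block_emb_in_vecs[OF m_pos i])
  fix l assume "l < b"
  then show "g l (proj m l (block_emb m i a)) = proj m l (block_emb m i (g i a))"
    by (cases "l = i") (simp_all add: m_pos a i g_in_vecs proj_block_emb_other g_vzero)
qed

lemma G_vadd_block_emb:
  assumes x: "x \<in> vecs m" and i: "i < b"
  shows "G (vadd v (block_emb m i x)) =
    vadd (G v) (block_emb m i (vadd (g i (vadd (proj m i v) x)) (g i (proj m i v))))"
proof (rule G_eqI)
  have "vadd (g i (vadd (proj m i v) x)) (g i (proj m i v)) \<in> vecs m"
    using g_in_vecs[OF i] x by blast
  then show "vadd (G v) (block_emb m i (vadd (g i (vadd (proj m i v) x)) (g i (proj m i v))))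
      \<in> vecs (m * b)"
    using block_emb_in_vecs[OF m_pos i] parallel_in_vecs by blast
  fix l assume l: "l < b"
  show "g l (proj m l (vadd v (block_emb m i x))) =
    proj m l (vadd (G v) (block_emb m i (vadd (g i (vadd (proj m i v) x)) (g i (proj m i v)))))"
  proof (cases "l = i")
    case True
    then show ?thesis
      using proj_G[OF l] m_pos x \<open>vadd _ _ \<in> vecs m\<close> by (simp add: proj_vadd vadd_ac)
  next
    case False
    then show ?thesis using proj_G[OF l] by (simp add: proj_vadd proj_block_emb_other)
  qed
qed

lemma inj_on_G: "inj_on G (vecs (m * b))"
proof (rule inj_onI)
  fix x y assume x: "x \<in> vecs (m * b)" and y: "y \<in> vecs (m * b)" and eq: "G x = G y"
  show "x = y"
  proof (rule vecs_eqI[OF m_pos x y])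
    fix i assume i: "i < b"
    have "g i (proj m i x) = g i (proj m i y)" using eq proj_G[OF i] by metis
    then show "proj m i x = proj m i y"
      using admissible_perm.admissible_inj[OF admissible[OF i]] by (auto dest: inj_onD)
  qed
qed

definition g_inv :: "nat \<Rightarrow> (nat \<Rightarrow> bool) \<Rightarrow> (nat \<Rightarrow> bool)" where
  "g_inv i = the_inv_into (vecs m) (g i)"

lemma parallel_perm_inv: "parallel_perm m b r g_inv"
  by (rule parallel_perm.intro)
    (simp_all add: m_pos g_inv_def admissible admissible_perm.admissible_perm_inv)

lemma g_inv_in_vecs: "i < b \<Longrightarrow> y \<in> vecs m \<Longrightarrow> g_inv i y \<in> vecs m"
  using parallel_perm.g_in_vecs[OF parallel_perm_inv] .

lemma g_g_inv: "i < b \<Longrightarrow> y \<in> vecs m \<Longrightarrow> g i (g_inv i y) = y"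
  by (simp add: g_inv_def f_the_inv_into_f_bij_betw[OF admissible_perm.bij[OF admissible]])

lemma G_inv_G: "x \<in> vecs (m * b) \<Longrightarrow> parallel m b g_inv (G x) = x"
  using parallel_perm.G_eqI[OF parallel_perm_inv] proj_G
  by (simp add: g_inv_def the_inv_into_f_f admissible_perm.admissible_inj[OF admissible])

lemma G_G_inv: "y \<in> vecs (m * b) \<Longrightarrow> G (parallel m b g_inv y) = y"
  by (rule G_eqI) (simp_all add: parallel_perm.proj_G[OF parallel_perm_inv] g_g_inv)

end


subsection \<open>Parallel maps between \<open>LA\<close> partitions\<close>

locale LA_parallel_map =
  parallel_perm m b r g + LA: LA_partition "m * b" U W1 W2 + LA': LA_partition "m * b" U' W1' W2'
  for m b r g U W1 W2 U' W1' W2' +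
  assumes maps_blocks: "\<And>x. x \<in> vecs (m * b) \<Longrightarrow> G ` LA_block U W1 W2 x = LA_block U' W1' W2' (G x)"
begin

lemma LA_partitions: "LA_partition (m * b) U W1 W2" "LA_partition (m * b) U' W1' W2'"
  by unfold_locales

lemma G_W1: "G ` W1 = W1'"
  using maps_blocks[of vzero] subspace_vzero[OF LA.U] subspace_vzero[OF LA'.U]
  by (simp add: G_vzero LA_block_def)

lemma proj_W1': "i < b \<Longrightarrow> proj m i ` W1' = g i ` proj m i ` W1"
  unfolding G_W1[symmetric] image_image using proj_G by simp

lemma g_block_slice_W1:
  assumes i: "i < b" shows "g i ` block_slice m i W1 = block_slice m i W1'"
proof (intro equalityI subsetI)
  fix y assume "y \<in> g i ` block_slice m i W1"
  then obtain x where x: "x \<in> vecs m" "block_emb m i x \<in> W1" "y = g i x"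
    by (auto simp: block_slice_def)
  then show "y \<in> block_slice m i W1'"
    using G_W1 G_block_emb[OF x(1) i] g_in_vecs[OF i] by (force simp: block_slice_def)
next
  fix y assume y: "y \<in> block_slice m i W1'"
  then obtain w where w: "w \<in> W1" "G w = block_emb m i y"
    using G_W1 by (auto simp: block_slice_def)
  define x where "x = g_inv i y"
  have x: "x \<in> vecs m" "g i x = y"
    using y g_inv_in_vecs[OF i] g_g_inv[OF i] by (auto simp: x_def block_slice_def)
  have "G (block_emb m i x) = G w" using G_block_emb[OF x(1) i] x(2) w(2) by simp
  then have "block_emb m i x = w"
    using inj_on_G block_emb_in_vecs[OF m_pos i] subspace_subset_vecs[OF LA.W1] w(1)
    by (auto dest: inj_onD)
  then show "y \<in> g i ` block_slice m i W1"
    using x w(1) by (auto simp: block_slice_def)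
qed

lemma derivative_in_block_slice:
  assumes i: "i < b" and w: "w \<in> W1" and x: "x \<in> vecs m"
    and U: "block_emb m i x \<in> U" and U': "block_emb m i (g i x) \<in> U'"
  shows "vadd (vadd (g i (vadd (proj m i w) x)) (g i x)) (g i (proj m i w)) \<in> block_slice m i W1'"
proof -
  define e where "e = block_emb m i x"
  have e: "e \<in> vecs (m * b)" "G e = block_emb m i (g i x)"
    using block_emb_in_vecs[OF m_pos i] G_block_emb[OF x i] by (simp_all add: e_def)
  \<comment> \<open>\<open>w + e\<close> and \<open>e\<close> lie in the same block \<open>W1 + e\<close>, so their images lie in \<open>W1' + G e\<close>\<close>
  have "vadd w e \<in> LA_block U W1 W2 e"
    using w U by (simp add: LA_block_def mem_coset_iff e_def)
  then have "G (vadd w e) \<in> G ` LA_block U W1 W2 e" by (rule imageI)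
  also have "\<dots> = coset W1' (G e)"
    using maps_blocks[OF e(1)] e(2) U' by (simp add: LA_block_def)
  finally have "vadd (G (vadd w e)) (G e) \<in> W1'" by (simp add: mem_coset_iff)
  moreover have "G w \<in> W1'" using G_W1 w by blast
  ultimately have "vadd (G w) (vadd (G (vadd w e)) (G e)) \<in> W1'"
    using subspace_vadd[OF LA'.W1] by blast
  moreover have "vadd (G w) (vadd (G (vadd w e)) (G e)) =
      block_emb m i (vadd (vadd (g i (vadd (proj m i w) x)) (g i x)) (g i (proj m i w)))"
    using G_vadd_block_emb[OF x i, of w] e(2) unfolding e_def block_emb_vadd
    by (auto simp: vadd_def)
  moreover have "vadd (vadd (g i (vadd (proj m i w) x)) (g i x)) (g i (proj m i w)) \<in> vecs m"
    by (simp add: g_in_vecs[OF i] x vadd_in_vecs)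
  ultimately show ?thesis by (simp add: block_slice_def)
qed

lemma g_proj_LA_block:
  assumes j: "j < b" and JU': "j \<notin> JU m b U'" and x: "x \<in> vecs m"
  shows "g j ` coset (if block_emb m j x \<in> U then proj m j ` W1 else proj m j ` W2) x
    = coset (proj m j ` W1') (g j x)"
proof -
  define e where "e = block_emb m j x"
  have e: "e \<in> vecs (m * b)" "proj m j e = x" "G e = block_emb m j (g j x)"
    using block_emb_in_vecs[OF m_pos j] m_pos x G_block_emb[OF x j] by (simp_all add: e_def)
  have "g j ` coset (if block_emb m j x \<in> U then proj m j ` W1 else proj m j ` W2) x
      = g j ` proj m j ` LA_block U W1 W2 e"
    using e(2) by (simp add: LA_block_def proj_image_coset e_def)
  also have "\<dots> = proj m j ` G ` LA_block U W1 W2 e"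
    by (simp add: image_image proj_G[OF j])
  also have "\<dots> = proj m j ` LA_block U' W1' W2' (G e)"
    by (simp add: maps_blocks[OF e(1)])
  also have "\<dots> = coset (proj m j ` W1') (g j x)"
    using block_emb_in_if_notin_JU[OF m_pos j JU' g_in_vecs[OF j x]] e(3) m_pos g_in_vecs[OF j x]
    by (simp add: LA_block_def proj_image_coset)
  finally show ?thesis .
qed

lemma proj_W1_trivial_if_JU:
  assumes j: "j < b" and JU: "j \<in> JU m b U" and JU': "j \<notin> JU m b U'"
  shows "proj m j ` W1 = {vzero}"
proof -
  define H where "H = block_slice m j U"
  obtain xo where xo: "xo \<in> vecs m" "block_emb m j xo \<notin> U"
    using block_emb_notin_if_JU[OF m_pos j JU] by blast
  show ?thesis
  proof (rule admissible_perm.maps_split_cosets_imp_trivial[OF admissible[OF j]])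
    show "subspace m H" unfolding H_def by (rule subspace_block_slice[OF LA.U])
    show "xo \<in> vecs m" "xo \<notin> H" using xo by (auto simp: H_def block_slice_def)
    show "vadd x y \<in> H" if "x \<in> vecs m" "x \<notin> H" "y \<in> vecs m" "y \<notin> H" for x y
      using that hyperplane_vadd_outside[OF LA.hyperplane LA.n_pos] block_emb_in_vecs[OF m_pos j]
      by (auto simp: H_def block_slice_def block_emb_vadd)
    show "subspace m (proj m j ` W1)" "subspace m (proj m j ` W2)" "subspace m (proj m j ` W1')"
      using proj_image_subspace LA.W1 LA.W2 LA'.W1 by blast+
    show "g j ` proj m j ` W1 = proj m j ` W1'" using proj_W1'[OF j] by simp
    show "subspace m (block_slice m j W1)" "subspace m (block_slice m j W1')"
      using subspace_block_slice LA.W1 LA'.W1 by blast+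
    show "block_slice m j W1 \<subseteq> H" using LA.W1_U by (auto simp: H_def block_slice_def)
    show "g j ` block_slice m j W1 = block_slice m j W1'" by (rule g_block_slice_W1[OF j])
    show "vadd (vadd (g j (vadd a x)) (g j x)) (g j a) \<in> block_slice m j W1'"
      if "a \<in> proj m j ` W1" "x \<in> H" for a x
      using that derivative_in_block_slice[OF j] block_emb_in_if_notin_JU[OF m_pos j JU'] g_in_vecs[OF j]
      by (auto simp: H_def block_slice_def)
    show "g j ` coset (if x \<in> H then proj m j ` W1 else proj m j ` W2) x = coset (proj m j ` W1') (g j x)"
      if "x \<in> vecs m" for x
      using g_proj_LA_block[OF j JU' that] that by (simp add: H_def block_slice_def)
  qed
qed

lemma proj_W1'_eq_vzero_iff:
  assumes i: "i < b" shows "proj m i ` W1' = {vzero} \<longleftrightarrow> proj m i ` W1 = {vzero}"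
proof -
  have "g i ` proj m i ` W1 = g i ` {vzero} \<longleftrightarrow> proj m i ` W1 = {vzero}"
    by (rule inj_on_image_eq_iff[OF admissible_perm.admissible_inj[OF admissible[OF i]]]) auto
  then show ?thesis by (simp add: proj_W1'[OF i] g_vzero[OF i])
qed

lemma block_subset_W1:
  assumes i: "i < b" and JU: "i \<notin> JU m b U" and JU': "i \<notin> JU m b U'"
    and nontrivial: "proj m i ` W1 \<noteq> {vzero}"
  shows "block m b i \<subseteq> W1" and "block m b i \<subseteq> W1'"
proof -
  have "vzero \<in> proj m i ` W1" using subspace_vzero[OF LA.W1] by force
  then obtain w where w: "w \<in> W1" "proj m i w \<noteq> vzero" using nontrivial by blast
  have "block_slice m i W1 = vecs m"
  proof (rule admissible_perm.derivative_in_coset_imp_full[OF admissible[OF i] proj_in_vecs w(2)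
        subspace_block_slice[OF LA.W1] subspace_block_slice[OF LA'.W1] g_block_slice_W1[OF i]])
    fix x assume x: "x \<in> vecs m"
    have "block_emb m i x \<in> U" "block_emb m i (g i x) \<in> U'"
      using block_emb_in_if_notin_JU[OF m_pos i] JU JU' x g_in_vecs[OF i x] by auto
    then show "vadd (vadd (g i (vadd (proj m i w) x)) (g i x)) (g i (proj m i w)) \<in> block_slice m i W1'"
      using derivative_in_block_slice[OF i w(1) x] by blast
  qed
  moreover have "g i ` vecs m = vecs m"
    using admissible_perm.bij[OF admissible[OF i]] by (simp add: bij_betw_def)
  ultimately have "block_slice m i W1' = vecs m" using g_block_slice_W1[OF i] by simp
  then show "block m b i \<subseteq> W1" "block m b i \<subseteq> W1'"
    using \<open>block_slice m i W1 = vecs m\<close> block_eq_image[OF m_pos i] by (auto simp: block_slice_def)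
qed

text \<open>If \<open>W1\<close> has no component in \<open>V\<^sub>j\<close>, then \<open>G\<close> acts on \<open>W1 + e\<close>, \<open>e \<in> V\<^sub>j\<close>, as the translation by
  \<open>G e\<close>; choosing \<open>e \<notin> U\<close>, both \<open>W1 + e\<close> and the block \<open>W2 + e\<close> are mapped onto \<open>W1' + G e\<close>.\<close>
lemma W2_eq_W1:
  assumes j: "j < b" and JU: "j \<in> JU m b U" and JU': "j \<notin> JU m b U'"
    and W1_j: "\<And>w. w \<in> W1 \<Longrightarrow> proj m j w = vzero"
  shows "W2 = W1"
proof -
  obtain x where x: "x \<in> vecs m" "block_emb m j x \<notin> U"
    using block_emb_notin_if_JU[OF m_pos j JU] by blast
  define e where "e = block_emb m j x"
  have e: "e \<in> vecs (m * b)" "G e = block_emb m j (g j x)"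
    using block_emb_in_vecs[OF m_pos j] G_block_emb[OF x(1) j] by (simp_all add: e_def)
  have "G e \<in> U'"
    using block_emb_in_if_notin_JU[OF m_pos j JU' g_in_vecs[OF j x(1)]] e(2) by simp
  then have "G ` coset W2 e = coset W1' (G e)"
    using maps_blocks[OF e(1)] x(2) by (simp add: LA_block_def e_def)
  also have "\<dots> = (\<lambda>w. vadd (G w) (G e)) ` W1"
    unfolding G_W1[symmetric] coset_def image_image ..
  also have "\<dots> = G ` coset W1 e"
    unfolding coset_def image_image
    using G_vadd_block_emb[OF x(1) j] W1_j g_vzero[OF j] e(2) by (simp add: e_def)
  moreover have "coset W1 e \<subseteq> vecs (m * b)" "coset W2 e \<subseteq> vecs (m * b)"
    using coset_subset_vecs e(1) subspace_subset_vecs[OF LA.W1] subspace_subset_vecs[OF LA.W2]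
    by auto
  ultimately have "coset W2 e = coset W1 e"
    by (simp add: inj_on_image_eq_iff[OF inj_on_G])
  then show ?thesis by (rule coset_cancel)
qed

lemma LA_parallel_map_inv: "LA_parallel_map m b r g_inv U' W1' W2' U W1 W2"
proof (intro LA_parallel_map.intro LA_parallel_map_axioms.intro)
  show "parallel_perm m b r g_inv" by (rule parallel_perm_inv)
  show "LA_partition (m * b) U' W1' W2'" "LA_partition (m * b) U W1 W2"
    using LA_partitions by simp_all
  show "parallel m b g_inv ` LA_block U' W1' W2' y = LA_block U W1 W2 (parallel m b g_inv y)"
    if "y \<in> vecs (m * b)" for y
    using LA_block_map_inverse[OF LA_partitions(1) G_inv_G G_G_inv parallel_in_vecs maps_blocks that] .
qed

end


locale disjoint_LA_parallel_map = LA_parallel_map +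
  assumes JU_disjoint: "JU m b U \<inter> JU m b U' = {}"
begin

lemma block_support_W1': "block_support m b W1' = block_support m b W1"
  using proj_W1'_eq_vzero_iff by (auto simp: block_support_def)

lemma block_support_notin_JU:
  assumes i: "i \<in> block_support m b W1"
  shows "i \<notin> JU m b U" and "i \<notin> JU m b U'"
proof -
  interpret inv: LA_parallel_map m b r g_inv U' W1' W2' U W1 W2
    by (rule LA_parallel_map_inv)
  show "i \<notin> JU m b U"
    using i proj_W1_trivial_if_JU JU_disjoint by (auto simp: block_support_def)
  have "i \<in> block_support m b W1'" using i block_support_W1' by simp
  then show "i \<notin> JU m b U'"
    using inv.proj_W1_trivial_if_JU JU_disjoint by (auto simp: block_support_def)
qed

lemma W1_eq_block_sum: "W1 = block_sum m b (block_support m b W1)"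
  and W1'_eq_block_sum: "W1' = block_sum m b (block_support m b W1)"
proof -
  have blocks: "block m b i \<subseteq> W1" "block m b i \<subseteq> W1'" if "i \<in> block_support m b W1" for i
    using block_subset_W1 block_support_notin_JU[OF that] that by (auto simp: block_support_def)
  show "W1 = block_sum m b (block_support m b W1)"
  proof
    show "W1 \<subseteq> block_sum m b (block_support m b W1)"
      using subset_block_sum_support[OF m_pos subspace_subset_vecs[OF LA.W1]] .
    show "block_sum m b (block_support m b W1) \<subseteq> W1"
      by (rule block_sum_subset[OF m_pos LA.W1]) (simp add: blocks(1))
  qed
  show "W1' = block_sum m b (block_support m b W1)"
  proof
    show "W1' \<subseteq> block_sum m b (block_support m b W1)"
      using subset_block_sum_support[OF m_pos subspace_subset_vecs[OF LA'.W1]] block_support_W1'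
      by simp
    show "block_sum m b (block_support m b W1) \<subseteq> W1'"
      by (rule block_sum_subset[OF m_pos LA'.W1]) (simp add: blocks(2))
  qed
qed

lemma W1'_eq_W1: "W1' = W1"
  by (rule trans[OF W1'_eq_block_sum W1_eq_block_sum[symmetric]])

lemma block_support_psubset: "block_support m b W1 \<subset> {..<b}"
  and W2_eq: "W2 = W1" and W2'_eq: "W2' = W1'"
proof -
  interpret inv: LA_parallel_map m b r g_inv U' W1' W2' U W1 W2
    by (rule LA_parallel_map_inv)
  have b: "0 < b" using LA.n_pos by simp
  obtain j where j: "j < b" "j \<in> JU m b U"
    using JU_nonempty[OF LA.hyperplane m_pos b] by blast
  obtain k where k: "k < b" "k \<in> JU m b U'"
    using JU_nonempty[OF LA'.hyperplane m_pos b] by blast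
  have j_out: "j \<notin> block_support m b W1" and k_out: "k \<notin> block_support m b W1"
    using block_support_notin_JU j k by blast+
  then show "block_support m b W1 \<subset> {..<b}"
    using j j_out by (auto simp: block_support_def)
  have "j \<notin> JU m b U'" "k \<notin> JU m b U" using j k JU_disjoint by blast+
  show "W2 = W1"
  proof (rule W2_eq_W1[OF j \<open>j \<notin> JU m b U'\<close>])
    fix w assume "w \<in> W1"
    then have "w \<in> block_sum m b (block_support m b W1)" by (simp only: W1_eq_block_sum[symmetric])
    then show "proj m j w = vzero" using proj_block_sum_outside j_out by blast
  qed
  show "W2' = W1'"
  proof (rule inv.W2_eq_W1[OF k \<open>k \<notin> JU m b U\<close>])
    fix w assume "w \<in> W1'"
    then have "w \<in> block_sum m b (block_support m b W1)" by (simp only: W1'_eq_block_sum[symmetric])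
    then show "proj m k w = vzero" using proj_block_sum_outside k_out by blast
  qed
qed

lemma wall_W1:
  assumes nontrivial: "\<not> trivial_partition (m * b) (LA (m * b) U' W1' W2')"
  shows "wall m b W1"
proof -
  have "block_support m b W1 \<noteq> {}"
  proof
    assume "block_support m b W1 = {}"
    then have "W1' = {vzero}" "W2' = {vzero}"
      using W1'_eq_block_sum W2'_eq block_sum_empty by simp_all
    then have "LA (m * b) U' W1' W2' = {{v} | v. v \<in> vecs (m * b)}"
      using LA'.LA_eq_lin_part by (auto simp: lin_part_def coset_def)
    then show False using nontrivial by (simp add: trivial_partition_def)
  qed
  then show ?thesis
    using block_support_psubset W1_eq_block_sum by (auto simp: wall_def block_sum_def)
qed

end

theorem lemma3p12:
  fixes m b r :: nat
    and g :: "nat \<Rightarrow> (nat \<Rightarrow> bool) \<Rightarrow> (nat \<Rightarrow> bool)"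
    and U W1 W2 U' W1' W2' :: "(nat \<Rightarrow> bool) set"
  assumes "m > 1" and "b > 1"
    and perm: "\<forall>i<b. bij_betw (g i) (vecs m) (vecs m)"
    and zero: "parallel m b g vzero = vzero"
    and du: "\<forall>i<b. diff_uniform m (g i) (2 ^ r)"
    and "r < m - 1"
    and sai: "\<forall>i<b. strongly_anti_invariant m r (g i)"
    and U: "hyperplane (m * b) U" "subspace (m * b) W1" "subspace (m * b) W2" "W1 \<subseteq> U" "W2 \<subseteq> U"
    and U': "hyperplane (m * b) U'" "subspace (m * b) W1'" "subspace (m * b) W2'"
            "W1' \<subseteq> U'" "W2' \<subseteq> U'"
    and J: "JU m b U \<inter> JU m b U' = {}"
    and nontriv: "\<not> trivial_partition (m * b) (LA (m * b) U' W1' W2')"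
    and maps: "maps_onto (parallel m b g) (LA (m * b) U W1 W2) (LA (m * b) U' W1' W2')"
  shows "wall m b W1 \<and> wall m b W1' \<and> wall m b W2 \<and> wall m b W2' \<and>
         W1 = W1' \<and> W1' = W2 \<and> W2 = W2' \<and>
         LA (m * b) U W1 W2 = lin_part (m * b) W1 \<and>
         LA (m * b) U' W1' W2' = lin_part (m * b) W1'"
proof -
  have n: "0 < m * b" using assms(1,2) by simp
  have LA: "LA_partition (m * b) U W1 W2" and LA': "LA_partition (m * b) U' W1' W2'"
    using U U' n by (simp_all add: LA_partition_def)
  have "parallel_perm m b r g"
    using assms(1) perm du sai
    by unfold_locales (auto simp: admissible_perm_def diff_uniform_imp_le)
  then interpret disjoint_LA_parallel_map m b r g U W1 W2 U' W1' W2'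
    by (intro disjoint_LA_parallel_map.intro LA_parallel_map.intro LA_parallel_map_axioms.intro
        disjoint_LA_parallel_map_axioms.intro maps_onto_LA_block[OF LA LA' parallel_in_vecs maps]
        LA LA' J)
  show ?thesis
    using wall_W1[OF nontriv] W1'_eq_W1 W2_eq W2'_eq LA.LA_eq_lin_part LA'.LA_eq_lin_part
    by simp
qed

end
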